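(* Let $G$ be a group acting without inversions on a tree $T$, let $H$ be a tame subgroup of $G$ containing hyperbolic elements, and let $\widetilde{X}$ be the graph obtained from $X=T_{H}/H$ by attaching a loop at each $H$-non-degenerate vertex. Then $$\overline{C}_{T}(H)=\overline{r}(\widetilde{X})=\frac{1}{2}\sum\big(\deg_{\widetilde{X}}([v]_{H})-2\big),$$ where the sum is over all vertices $[v]_{H}$ of $\widetilde{X}$.
   Context: $T_H$ is the unique minimal $H$-invariant subtree of $T$; $H$ tame with a hyperbolic element means $T_H/H$ is finite. A vertex $v$ of $T_H$ is $H$-degenerate if $H_v=H_e$ for some edge $e$ of $T_H$ with initial vertex $v$; otherwise $[v]_H$ is non-degenerate. $C_T(H)=r(T_H/H)+|V_{ndeg}(T_H/H)|$ (rank of the fundamental group plus number of non-degenerate vertices; this equals $r(T/H)+|V_{ndeg}(T/H)|$), and $\overline{C}_T(H)=\max\{C_T(H)-1,0\}$. For a finite connected graph $Y$, $\overline{r}(Y)=\max\{r(Y)-1,0\}$ where $r(Y)$ is the rank of its fundamental group. $\deg_{\widetilde X}(w)$ is the number of (oriented) edges with initial vertex $w$, so an attached loop contributes $2$. *)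

theory Defs
  imports Complex_Main "HOL-Algebra.Group"
begin

record ('v, 'e) sgraph =
  verts :: "'v set"
  arcs :: "'e set"
  src :: "'e \<Rightarrow> 'v"
  rev_arc :: "'e \<Rightarrow> 'e"

definition tgt :: "('v, 'e) sgraph \<Rightarrow> 'e \<Rightarrow> 'v" where
  "tgt Y e = src Y (rev_arc Y e)"

definition sgraph :: "('v, 'e) sgraph \<Rightarrow> bool" where
  "sgraph Y \<longleftrightarrow> (\<forall>e\<in>arcs Y. rev_arc Y e \<in> arcs Y \<and> rev_arc Y (rev_arc Y e) = e
      \<and> rev_arc Y e \<noteq> e \<and> src Y e \<in> verts Y)"

fun walk :: "('v, 'e) sgraph \<Rightarrow> 'v \<Rightarrow> 'e list \<Rightarrow> 'v \<Rightarrow> bool" where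
  "walk Y v [] w \<longleftrightarrow> v = w \<and> v \<in> verts Y"
| "walk Y v (e # es) w \<longleftrightarrow> e \<in> arcs Y \<and> src Y e = v \<and> walk Y (tgt Y e) es w"

definition reduced :: "('v, 'e) sgraph \<Rightarrow> 'e list \<Rightarrow> bool" where
  "reduced Y es \<longleftrightarrow> (\<forall>i. Suc i < length es \<longrightarrow> es ! Suc i \<noteq> rev_arc Y (es ! i))"

definition connected_graph :: "('v, 'e) sgraph \<Rightarrow> bool" where
  "connected_graph Y \<longleftrightarrow> verts Y \<noteq> {} \<and> (\<forall>v\<in>verts Y. \<forall>w\<in>verts Y. \<exists>es. walk Y v es w)"

definition is_tree :: "('v, 'e) sgraph \<Rightarrow> bool" where
  "is_tree Y \<longleftrightarrow> sgraph Y \<and> connected_graph Y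
      \<and> \<not> (\<exists>v es. es \<noteq> [] \<and> walk Y v es v \<and> reduced Y es)"

definition subtree :: "('v, 'e) sgraph \<Rightarrow> 'v set \<Rightarrow> 'e set \<Rightarrow> bool" where
  "subtree T VS ES \<longleftrightarrow> VS \<subseteq> verts T \<and> ES \<subseteq> arcs T
      \<and> is_tree (T\<lparr>verts := VS, arcs := ES\<rparr>)"

text \<open>Rank of the fundamental group of a finite connected graph: number of geometric
  (unoriented) edges minus number of vertices plus one.\<close>
definition graph_rank :: "('v, 'e) sgraph \<Rightarrow> int" where
  "graph_rank Y = int (card (arcs Y)) div 2 - int (card (verts Y)) + 1"

definition rbar :: "('v, 'e) sgraph \<Rightarrow> int" where
  "rbar Y = max (graph_rank Y - 1) 0"

text \<open>Number of oriented edges with initial vertex w (a loop contributes 2).\<close>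
definition deg :: "('v, 'e) sgraph \<Rightarrow> 'v \<Rightarrow> nat" where
  "deg Y w = card {e \<in> arcs Y. src Y e = w}"

definition tree_action ::
  "('g, 'b) monoid_scheme \<Rightarrow> ('v, 'e) sgraph \<Rightarrow> ('g \<Rightarrow> 'v \<Rightarrow> 'v) \<Rightarrow> ('g \<Rightarrow> 'e \<Rightarrow> 'e) \<Rightarrow> bool"
  where
  "tree_action G T av ae \<longleftrightarrow> group G \<and> is_tree T
    \<and> (\<forall>g\<in>carrier G. av g ` verts T \<subseteq> verts T \<and> ae g ` arcs T \<subseteq> arcs T)
    \<and> (\<forall>v\<in>verts T. av \<one>\<^bsub>G\<^esub> v = v) \<and> (\<forall>e\<in>arcs T. ae \<one>\<^bsub>G\<^esub> e = e)
    \<and> (\<forall>g\<in>carrier G. \<forall>h\<in>carrier G. \<forall>v\<in>verts T. av (g \<otimes>\<^bsub>G\<^esub> h) v = av g (av h v))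
    \<and> (\<forall>g\<in>carrier G. \<forall>h\<in>carrier G. \<forall>e\<in>arcs T. ae (g \<otimes>\<^bsub>G\<^esub> h) e = ae g (ae h e))
    \<and> (\<forall>g\<in>carrier G. \<forall>e\<in>arcs T. src T (ae g e) = av g (src T e)
                                   \<and> ae g (rev_arc T e) = rev_arc T (ae g e))"

definition without_inversions ::
  "('g, 'b) monoid_scheme \<Rightarrow> ('v, 'e) sgraph \<Rightarrow> ('g \<Rightarrow> 'e \<Rightarrow> 'e) \<Rightarrow> bool" where
  "without_inversions G T ae \<longleftrightarrow> (\<forall>g\<in>carrier G. \<forall>e\<in>arcs T. ae g e \<noteq> rev_arc T e)"

text \<open>For an action without inversions, an element is elliptic iff it fixes a vertex;
  hyperbolic means not elliptic.\<close>
definition hyperbolic :: "('v, 'e) sgraph \<Rightarrow> ('g \<Rightarrow> 'v \<Rightarrow> 'v) \<Rightarrow> 'g \<Rightarrow> bool" where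
  "hyperbolic T av g \<longleftrightarrow> (\<forall>v\<in>verts T. av g v \<noteq> v)"

definition invariant_subtree ::
  "('v, 'e) sgraph \<Rightarrow> ('g \<Rightarrow> 'v \<Rightarrow> 'v) \<Rightarrow> ('g \<Rightarrow> 'e \<Rightarrow> 'e) \<Rightarrow> 'g set \<Rightarrow> 'v set \<Rightarrow> 'e set \<Rightarrow> bool"
  where
  "invariant_subtree T av ae H VS ES \<longleftrightarrow> subtree T VS ES
     \<and> (\<forall>h\<in>H. av h ` VS \<subseteq> VS \<and> ae h ` ES \<subseteq> ES)"

definition minimal_invariant_subtree ::
  "('v, 'e) sgraph \<Rightarrow> ('g \<Rightarrow> 'v \<Rightarrow> 'v) \<Rightarrow> ('g \<Rightarrow> 'e \<Rightarrow> 'e) \<Rightarrow> 'g set \<Rightarrow> 'v set \<Rightarrow> 'e set \<Rightarrow> bool"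
  where
  "minimal_invariant_subtree T av ae H VS ES \<longleftrightarrow> invariant_subtree T av ae H VS ES
     \<and> (\<forall>VS' ES'. invariant_subtree T av ae H VS' ES' \<and> VS' \<subseteq> VS \<and> ES' \<subseteq> ES
            \<longrightarrow> VS' = VS \<and> ES' = ES)"

definition orb :: "('g \<Rightarrow> 'a \<Rightarrow> 'a) \<Rightarrow> 'g set \<Rightarrow> 'a \<Rightarrow> 'a set" where
  "orb act H x = (\<lambda>h. act h x) ` H"

definition stab :: "('g \<Rightarrow> 'a \<Rightarrow> 'a) \<Rightarrow> 'g set \<Rightarrow> 'a \<Rightarrow> 'g set" where
  "stab act H x = {h \<in> H. act h x = x}"

definition quotient_graph ::
  "('v, 'e) sgraph \<Rightarrow> ('g \<Rightarrow> 'v \<Rightarrow> 'v) \<Rightarrow> ('g \<Rightarrow> 'e \<Rightarrow> 'e) \<Rightarrow> 'g set \<Rightarrow> 'v set \<Rightarrow> 'e set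
     \<Rightarrow> ('v set, 'e set) sgraph" where
  "quotient_graph T av ae H VS ES =
     \<lparr> verts = orb av H ` VS, arcs = orb ae H ` ES,
       src = (\<lambda>Q. orb av H (src T (SOME e. e \<in> Q))),
       rev_arc = (\<lambda>Q. orb ae H (rev_arc T (SOME e. e \<in> Q))) \<rparr>"

definition degenerate ::
  "('v, 'e) sgraph \<Rightarrow> ('g \<Rightarrow> 'v \<Rightarrow> 'v) \<Rightarrow> ('g \<Rightarrow> 'e \<Rightarrow> 'e) \<Rightarrow> 'g set \<Rightarrow> 'e set \<Rightarrow> 'v \<Rightarrow> bool"
  where
  "degenerate T av ae H ES v \<longleftrightarrow> (\<exists>e\<in>ES. src T e = v \<and> stab av H v = stab ae H e)"

definition ndeg_verts ::
  "('v, 'e) sgraph \<Rightarrow> ('g \<Rightarrow> 'v \<Rightarrow> 'v) \<Rightarrow> ('g \<Rightarrow> 'e \<Rightarrow> 'e) \<Rightarrow> 'g set \<Rightarrow> 'v set \<Rightarrow> 'e set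
     \<Rightarrow> 'v set set" where
  "ndeg_verts T av ae H VS ES = {orb av H v | v. v \<in> VS \<and> \<not> degenerate T av ae H ES v}"

definition C_T ::
  "('v, 'e) sgraph \<Rightarrow> ('g \<Rightarrow> 'v \<Rightarrow> 'v) \<Rightarrow> ('g \<Rightarrow> 'e \<Rightarrow> 'e) \<Rightarrow> 'g set \<Rightarrow> 'v set \<Rightarrow> 'e set \<Rightarrow> int"
  where
  "C_T T av ae H VS ES = graph_rank (quotient_graph T av ae H VS ES)
       + int (card (ndeg_verts T av ae H VS ES))"

definition Cbar_T ::
  "('v, 'e) sgraph \<Rightarrow> ('g \<Rightarrow> 'v \<Rightarrow> 'v) \<Rightarrow> ('g \<Rightarrow> 'e \<Rightarrow> 'e) \<Rightarrow> 'g set \<Rightarrow> 'v set \<Rightarrow> 'e set \<Rightarrow> int"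
  where
  "Cbar_T T av ae H VS ES = max (C_T T av ae H VS ES - 1) 0"

definition attach_loops :: "('v, 'e) sgraph \<Rightarrow> 'v set \<Rightarrow> ('v, 'e + ('v \<times> bool)) sgraph" where
  "attach_loops Y L =
     \<lparr> verts = verts Y, arcs = Inl ` arcs Y \<union> Inr ` (L \<times> UNIV),
       src = case_sum (src Y) fst,
       rev_arc = case_sum (\<lambda>e. Inl (rev_arc Y e)) (\<lambda>(w, b). Inr (w, \<not> b)) \<rparr>"

end

theory Submission
  imports Defs
begin

text \<open>
  For a finite graph Y with E oriented edges, the handshake identity E = sum (deg w) gives
  r(Y) - 1 = E/2 - |V(Y)| = 1/2 * sum (deg w - 2), which is nonnegative as soon as every
  vertex has degree at least 2. Attaching a loop raises the rank by one, so r(X~) = C_T(H),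
  and it remains to bound the degrees of X~. A non-degenerate vertex carries its loop. At a
  degenerate vertex [v], with H_v = H_e, a second arc f of T_H at v exists: otherwise every
  vertex of the orbit Hv would be a leaf of T_H, and deleting that orbit would leave a
  smaller H-invariant subtree.
\<close>

lemma sgraph_even_card_arcs:
  assumes Y: "sgraph Y" and fin: "finite (arcs Y)"
  shows "even (card (arcs Y))"
proof -
  let ?pairs = "(\<lambda>e. {e, rev_arc Y e}) ` arcs Y"
  have "\<Union>?pairs = arcs Y" using Y unfolding sgraph_def by auto
  moreover have "2 * card ?pairs = card (\<Union>?pairs)"
  proof (rule card_partition)
    show "finite ?pairs" "finite (\<Union>?pairs)" using fin Y unfolding sgraph_def by auto
    show "card c = 2" if "c \<in> ?pairs" for c using that Y unfolding sgraph_def by auto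
    show "c1 \<inter> c2 = {}" if c: "c1 \<in> ?pairs" "c2 \<in> ?pairs" "c1 \<noteq> c2" for c1 c2
    proof -
      obtain e f where ef: "e \<in> arcs Y" "f \<in> arcs Y" "c1 = {e, rev_arc Y e}" "c2 = {f, rev_arc Y f}"
        using c(1,2) by blast
      then have "rev_arc Y (rev_arc Y e) = e" "rev_arc Y (rev_arc Y f) = f"
        using Y unfolding sgraph_def by auto
      then have "c1 = c2" if "x \<in> c1" "x \<in> c2" for x
        using that ef by (metis empty_iff insert_commute insert_iff)
      then show ?thesis using c(3) by blast
    qed
  qed
  ultimately show ?thesis by (metis dvd_triv_left)
qed

lemma sum_deg_eq_card_arcs:
  assumes Y: "sgraph Y" and "finite (verts Y)" "finite (arcs Y)"
  shows "(\<Sum>w\<in>verts Y. deg Y w) = card (arcs Y)"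
proof -
  have "src Y ` arcs Y \<subseteq> verts Y" using Y unfolding sgraph_def by auto
  then show ?thesis
    using sum.group[of "arcs Y" "verts Y" "src Y" "\<lambda>_. 1::nat"] assms
    by (simp add: deg_def)
qed

lemma rbar_eq_half_sum_deg_minus_2:
  assumes Y: "sgraph Y" and fin: "finite (verts Y)" "finite (arcs Y)"
    and deg: "\<And>w. w \<in> verts Y \<Longrightarrow> 2 \<le> deg Y w"
  shows "real_of_int (rbar Y) = 1/2 * (\<Sum>w\<in>verts Y. (real (deg Y w) - 2))"
proof -
  obtain k where k: "card (arcs Y) = 2 * k" using sgraph_even_card_arcs[OF Y fin(2)] by blast
  have sum: "(\<Sum>w\<in>verts Y. deg Y w) = 2 * k" using sum_deg_eq_card_arcs[OF Y fin] k by simp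
  have "2 * card (verts Y) \<le> 2 * k"
    using sum_mono[of "verts Y" "\<lambda>_. 2" "deg Y"] deg sum by simp
  then have "rbar Y = int k - int (card (verts Y))"
    unfolding rbar_def graph_rank_def k by simp
  moreover have "(\<Sum>w\<in>verts Y. real (deg Y w)) = 2 * real k"
    using arg_cong[OF sum, of real] by simp
  ultimately show ?thesis by (simp add: sum_subtractf)
qed

lemma sgraph_attach_loops:
  assumes "sgraph Y" "L \<subseteq> verts Y"
  shows "sgraph (attach_loops Y L)"
  using assms unfolding sgraph_def attach_loops_def by auto

lemma deg_attach_loops:
  assumes "finite (arcs Y)"
  shows "deg (attach_loops Y L) w = deg Y w + (if w \<in> L then 2 else 0)"
proof -
  have "{e \<in> arcs (attach_loops Y L). src (attach_loops Y L) e = w}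
      = Inl ` {e \<in> arcs Y. src Y e = w} \<union> Inr ` (({w} \<inter> L) \<times> UNIV)"
    unfolding attach_loops_def by auto
  moreover have "card (Inl ` {e \<in> arcs Y. src Y e = w} \<union> Inr ` (({w} \<inter> L) \<times> (UNIV :: bool set)))
      = deg Y w + card (({w} \<inter> L) \<times> (UNIV :: bool set))"
    using assms by (subst card_Un_disjoint) (auto simp: card_image deg_def)
  ultimately show ?thesis by (simp add: deg_def card_cartesian_product)
qed

lemma graph_rank_attach_loops:
  assumes "finite (arcs Y)" "finite L"
  shows "graph_rank (attach_loops Y L) = graph_rank Y + int (card L)"
proof -
  have "card (arcs (attach_loops Y L)) = card (arcs Y) + card (L \<times> (UNIV :: bool set))"
    unfolding attach_loops_def sgraph.select_convs
    using assms by (subst card_Un_disjoint) (auto simp: card_image)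
  then show ?thesis
    unfolding graph_rank_def by (simp add: attach_loops_def card_cartesian_product)
qed

definition delete_verts :: "('v, 'e) sgraph \<Rightarrow> 'v set \<Rightarrow> ('v, 'e) sgraph" where
  "delete_verts Y D = Y\<lparr>verts := verts Y - D, arcs := {f \<in> arcs Y. src Y f \<notin> D \<and> tgt Y f \<notin> D}\<rparr>"

lemma delete_verts_simps [simp]:
  "verts (delete_verts Y D) = verts Y - D"
  "arcs (delete_verts Y D) = {f \<in> arcs Y. src Y f \<notin> D \<and> tgt Y f \<notin> D}"
  "src (delete_verts Y D) = src Y" "rev_arc (delete_verts Y D) = rev_arc Y"
  by (simp_all add: delete_verts_def)

lemma tgt_delete_verts [simp]: "tgt (delete_verts Y D) = tgt Y"
  by (simp add: tgt_def fun_eq_iff)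

lemma tgt_update [simp]: "tgt (Y\<lparr>verts := V, arcs := E\<rparr>) = tgt Y"
  by (simp add: tgt_def fun_eq_iff)

lemma delete_verts_update:
  "delete_verts (Y\<lparr>verts := V, arcs := E\<rparr>) D
     = Y\<lparr>verts := V - D, arcs := {f \<in> E. src Y f \<notin> D \<and> tgt Y f \<notin> D}\<rparr>"
  by (simp add: delete_verts_def)

lemma sgraph_delete_verts:
  assumes "sgraph Y"
  shows "sgraph (delete_verts Y D)"
  unfolding sgraph_def
proof
  fix f assume "f \<in> arcs (delete_verts Y D)"
  with assms show "rev_arc (delete_verts Y D) f \<in> arcs (delete_verts Y D)
      \<and> rev_arc (delete_verts Y D) (rev_arc (delete_verts Y D) f) = f
      \<and> rev_arc (delete_verts Y D) f \<noteq> f \<and> src (delete_verts Y D) f \<in> verts (delete_verts Y D)"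
    unfolding sgraph_def by (auto simp: tgt_def)
qed

lemma walk_subgraph:
  assumes "walk (Y\<lparr>verts := V, arcs := E\<rparr>) x es y" "V \<subseteq> verts Y" "E \<subseteq> arcs Y"
  shows "walk Y x es y"
  using assms by (induction es arbitrary: x) (auto simp: tgt_def)

lemma walk_delete_leaves:
  assumes Y: "sgraph Y"
    and leaf: "\<And>u f g. u \<in> D \<Longrightarrow> f \<in> arcs Y \<Longrightarrow> g \<in> arcs Y \<Longrightarrow> src Y f = u \<Longrightarrow> src Y g = u \<Longrightarrow> f = g"
    and "walk Y x es y" "x \<notin> D" "y \<notin> D"
  shows "\<exists>es'. walk (delete_verts Y D) x es' y"
  using assms(3,4)
proof (induction "length es" arbitrary: x es rule: less_induct)
  case less
  show ?case
  proof (cases es)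
    case Nil
    then have "walk (delete_verts Y D) x [] y" using less.prems by auto
    then show ?thesis ..
  next
    case (Cons f rest)
    then have f: "f \<in> arcs Y" "src Y f = x" and rest: "walk Y (tgt Y f) rest y"
      using less.prems by auto
    show ?thesis
    proof (cases "tgt Y f \<in> D")
      case False
      then obtain es' where "walk (delete_verts Y D) (tgt Y f) es' y"
        using less.hyps[OF _ rest] Cons by auto
      then have "walk (delete_verts Y D) x (f # es') y"
        using f False less.prems by simp
      then show ?thesis ..
    next
      case True
      \<comment> \<open>A walk entering a leaf must leave it along the reverse arc, returning to x.\<close>
      with rest \<open>y \<notin> D\<close> obtain g rest' where g: "rest = g # rest'" "g \<in> arcs Y" "src Y g = tgt Y f"
          and rest': "walk Y (tgt Y g) rest' y"
        by (cases rest) auto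
      have "g = rev_arc Y f" using leaf[OF True g(2)] Y f g(3) by (simp add: sgraph_def tgt_def)
      then have "tgt Y g = x" using Y f by (simp add: sgraph_def tgt_def)
      then show ?thesis using less.hyps[OF _ rest'] less.prems Cons g by auto
    qed
  qed
qed

lemma is_tree_delete_leaves:
  assumes tree: "is_tree Y"
    and leaf: "\<And>u f g. u \<in> D \<Longrightarrow> f \<in> arcs Y \<Longrightarrow> g \<in> arcs Y \<Longrightarrow> src Y f = u \<Longrightarrow> src Y g = u \<Longrightarrow> f = g"
    and nonempty: "verts Y - D \<noteq> {}"
  shows "is_tree (delete_verts Y D)"
proof -
  have Y: "sgraph Y" using tree by (simp add: is_tree_def)
  have "sgraph (delete_verts Y D)" using Y by (rule sgraph_delete_verts)
  moreover have "connected_graph (delete_verts Y D)"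
    unfolding connected_graph_def
  proof (intro conjI ballI)
    show "verts (delete_verts Y D) \<noteq> {}" using nonempty by simp
  next
    fix x y assume "x \<in> verts (delete_verts Y D)" "y \<in> verts (delete_verts Y D)"
    then have xy: "x \<in> verts Y" "y \<in> verts Y" "x \<notin> D" "y \<notin> D" by auto
    have "connected_graph Y" using tree by (simp add: is_tree_def)
    then obtain es where "walk Y x es y" using xy(1,2) unfolding connected_graph_def by blast
    from Y leaf this xy(3,4) show "\<exists>es. walk (delete_verts Y D) x es y" by (rule walk_delete_leaves)
  qed
  moreover have "walk Y v es v" if "walk (delete_verts Y D) v es v" for v es
    using that unfolding delete_verts_def by (rule walk_subgraph) auto
  moreover have "reduced Y es" if "reduced (delete_verts Y D) es" for es
    using that by (simp add: reduced_def)
  ultimately show ?thesis using tree unfolding is_tree_def by metis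
qed

locale subgroup_action =
  fixes G :: "('g, 'b) monoid_scheme" and H :: "'g set" and S :: "'a set"
    and act :: "'g \<Rightarrow> 'a \<Rightarrow> 'a"
  assumes group: "group G" and subgroup: "subgroup H G"
    and act_closed: "h \<in> H \<Longrightarrow> x \<in> S \<Longrightarrow> act h x \<in> S"
    and act_one: "x \<in> S \<Longrightarrow> act \<one>\<^bsub>G\<^esub> x = x"
    and act_mult: "g \<in> H \<Longrightarrow> h \<in> H \<Longrightarrow> x \<in> S \<Longrightarrow> act (g \<otimes>\<^bsub>G\<^esub> h) x = act g (act h x)"
begin

lemma act_inv_act: "h \<in> H \<Longrightarrow> x \<in> S \<Longrightarrow> act (inv\<^bsub>G\<^esub> h) (act h x) = x"
  using act_mult[of "inv\<^bsub>G\<^esub> h" h x] act_one subgroup group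
  by (simp add: subgroup.m_inv_closed subgroup.mem_carrier group.l_inv)

lemma act_act_inv: "h \<in> H \<Longrightarrow> x \<in> S \<Longrightarrow> act h (act (inv\<^bsub>G\<^esub> h) x) = x"
  using act_mult[of h "inv\<^bsub>G\<^esub> h" x] act_one subgroup group
  by (simp add: subgroup.m_inv_closed subgroup.mem_carrier group.r_inv)

lemma mem_orb_self: "x \<in> S \<Longrightarrow> x \<in> orb act H x"
  using act_one subgroup.one_closed[OF subgroup] unfolding orb_def by force

lemma orb_act: "h \<in> H \<Longrightarrow> x \<in> S \<Longrightarrow> orb act H (act h x) = orb act H x"
proof (intro equalityI subsetI)
  fix y assume h: "h \<in> H" and x: "x \<in> S"
  {
    assume "y \<in> orb act H (act h x)"
    then obtain k where "k \<in> H" "y = act k (act h x)" unfolding orb_def by blast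
    then have "y = act (k \<otimes>\<^bsub>G\<^esub> h) x" "k \<otimes>\<^bsub>G\<^esub> h \<in> H"
      using act_mult[OF _ h x] subgroup.m_closed[OF subgroup _ h] by auto
    then show "y \<in> orb act H x" unfolding orb_def by blast
  next
    assume "y \<in> orb act H x"
    then obtain k where k: "k \<in> H" "y = act k x" unfolding orb_def by blast
    have "inv\<^bsub>G\<^esub> h \<in> H" using h by (simp add: subgroup subgroup.m_inv_closed)
    with k have "y = act (k \<otimes>\<^bsub>G\<^esub> inv\<^bsub>G\<^esub> h) (act h x)" "k \<otimes>\<^bsub>G\<^esub> inv\<^bsub>G\<^esub> h \<in> H"
      using act_mult act_closed act_inv_act h x subgroup.m_closed[OF subgroup] by auto
    then show "y \<in> orb act H (act h x)" unfolding orb_def by blast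
  }
qed

lemma orb_eq_of_mem: "y \<in> orb act H x \<Longrightarrow> x \<in> S \<Longrightarrow> orb act H y = orb act H x"
  using orb_act unfolding orb_def by blast

lemma act_mem_orb_iff:
  assumes "h \<in> H" "x \<in> S" "y \<in> S"
  shows "act h x \<in> orb act H y \<longleftrightarrow> x \<in> orb act H y"
  using orb_eq_of_mem[OF _ \<open>y \<in> S\<close>] orb_act[OF assms(1,2)] mem_orb_self[OF \<open>x \<in> S\<close>]
    mem_orb_self[OF act_closed[OF assms(1,2)]] by blast

lemma some_mem_orb: "x \<in> S \<Longrightarrow> \<exists>h\<in>H. (SOME y. y \<in> orb act H x) = act h x"
  using someI[of "\<lambda>y. y \<in> orb act H x", OF mem_orb_self] unfolding orb_def by blast

end

locale minimal_subtree =
  fixes G :: "('g, 'b) monoid_scheme" and T :: "('v, 'e) sgraph"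
    and av :: "'g \<Rightarrow> 'v \<Rightarrow> 'v" and ae :: "'g \<Rightarrow> 'e \<Rightarrow> 'e"
    and H :: "'g set" and VS :: "'v set" and ES :: "'e set"
  assumes action: "tree_action G T av ae"
    and no_inversions: "without_inversions G T ae"
    and subgroup: "subgroup H G"
    and minimal: "minimal_invariant_subtree T av ae H VS ES"

sublocale minimal_subtree \<subseteq> V: subgroup_action G H "verts T" av
  using action subgroup unfolding subgroup_action_def tree_action_def
  by (auto simp: subgroup.mem_carrier image_subset_iff)

sublocale minimal_subtree \<subseteq> E: subgroup_action G H "arcs T" ae
  using action subgroup unfolding subgroup_action_def tree_action_def
  by (auto simp: subgroup.mem_carrier image_subset_iff)

context minimal_subtree
begin

lemma sgraph_tree: "sgraph T"
  using action by (simp add: tree_action_def is_tree_def)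

lemma src_act: "h \<in> H \<Longrightarrow> e \<in> arcs T \<Longrightarrow> src T (ae h e) = av h (src T e)"
  and rev_arc_act: "h \<in> H \<Longrightarrow> e \<in> arcs T \<Longrightarrow> ae h (rev_arc T e) = rev_arc T (ae h e)"
  using action subgroup by (auto simp: tree_action_def subgroup.mem_carrier)

lemma tgt_act:
  assumes "h \<in> H" "e \<in> arcs T"
  shows "tgt T (ae h e) = av h (tgt T e)"
proof -
  have "rev_arc T e \<in> arcs T" using sgraph_tree assms(2) by (simp add: sgraph_def)
  then show ?thesis using assms by (simp add: tgt_def src_act flip: rev_arc_act)
qed

lemma act_ne_rev_arc: "h \<in> H \<Longrightarrow> e \<in> arcs T \<Longrightarrow> ae h e \<noteq> rev_arc T e"
  using no_inversions subgroup by (auto simp: without_inversions_def subgroup.mem_carrier)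

lemma subtree: "is_tree (T\<lparr>verts := VS, arcs := ES\<rparr>)" "VS \<subseteq> verts T" "ES \<subseteq> arcs T"
  using minimal by (auto simp: minimal_invariant_subtree_def invariant_subtree_def subtree_def)

lemma subtree_invariant: "h \<in> H \<Longrightarrow> v \<in> VS \<Longrightarrow> av h v \<in> VS" "h \<in> H \<Longrightarrow> e \<in> ES \<Longrightarrow> ae h e \<in> ES"
  using minimal unfolding minimal_invariant_subtree_def invariant_subtree_def by blast+

lemma subtree_arc: "e \<in> ES \<Longrightarrow> rev_arc T e \<in> ES \<and> rev_arc T (rev_arc T e) = e \<and> src T e \<in> VS \<and> tgt T e \<in> VS"
  using subtree(1) by (auto simp: is_tree_def sgraph_def tgt_def)

lemma minimal_subtree_unique:
  "invariant_subtree T av ae H VS' ES' \<Longrightarrow> VS' \<subseteq> VS \<Longrightarrow> ES' \<subseteq> ES \<Longrightarrow> VS' = VS"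
  using minimal unfolding minimal_invariant_subtree_def by blast

lemma delete_orbit_invariant:
  assumes x: "x \<in> verts T" and h: "h \<in> H"
  shows "av h ` (VS - orb av H x) \<subseteq> VS - orb av H x"
    and "ae h ` {f \<in> ES. src T f \<notin> orb av H x \<and> tgt T f \<notin> orb av H x}
      \<subseteq> {f \<in> ES. src T f \<notin> orb av H x \<and> tgt T f \<notin> orb av H x}"
proof -
  have stays: "av h u \<notin> orb av H x" if "u \<in> verts T" "u \<notin> orb av H x" for u
    using V.act_mem_orb_iff[OF h that(1) x] that(2) by blast
  show "av h ` (VS - orb av H x) \<subseteq> VS - orb av H x"
    using stays subtree(2) subtree_invariant(1)[OF h] by blast
  show "ae h ` {f \<in> ES. src T f \<notin> orb av H x \<and> tgt T f \<notin> orb av H x}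
      \<subseteq> {f \<in> ES. src T f \<notin> orb av H x \<and> tgt T f \<notin> orb av H x}"
  proof (rule image_subsetI)
    fix f assume "f \<in> {f \<in> ES. src T f \<notin> orb av H x \<and> tgt T f \<notin> orb av H x}"
    then have f: "f \<in> ES" "f \<in> arcs T" "src T f \<notin> orb av H x" "tgt T f \<notin> orb av H x"
      using subtree(3) by auto
    moreover have "src T f \<in> verts T" "tgt T f \<in> verts T" using subtree_arc[OF f(1)] subtree(2) by auto
    ultimately show "ae h f \<in> {f \<in> ES. src T f \<notin> orb av H x \<and> tgt T f \<notin> orb av H x}"
      using stays subtree_invariant(2)[OF h] src_act[OF h] tgt_act[OF h] by auto
  qed
qed

lemma invariant_subtree_delete_orbit:
  assumes x: "x \<in> verts T"
    and leaf: "\<And>u f g. u \<in> orb av H x \<Longrightarrow> f \<in> ES \<Longrightarrow> g \<in> ES \<Longrightarrow> src T f = u \<Longrightarrow> src T g = u \<Longrightarrow> f = g"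
    and nonempty: "VS - orb av H x \<noteq> {}"
  shows "invariant_subtree T av ae H (VS - orb av H x)
           {f \<in> ES. src T f \<notin> orb av H x \<and> tgt T f \<notin> orb av H x}"
proof -
  let ?ES' = "{f \<in> ES. src T f \<notin> orb av H x \<and> tgt T f \<notin> orb av H x}"
  have "is_tree (delete_verts (T\<lparr>verts := VS, arcs := ES\<rparr>) (orb av H x))"
  proof (rule is_tree_delete_leaves)
    show "is_tree (T\<lparr>verts := VS, arcs := ES\<rparr>)" by (rule subtree(1))
    show "verts (T\<lparr>verts := VS, arcs := ES\<rparr>) - orb av H x \<noteq> {}" using nonempty by simp
    show "f = g" if "u \<in> orb av H x" "f \<in> arcs (T\<lparr>verts := VS, arcs := ES\<rparr>)"
      "g \<in> arcs (T\<lparr>verts := VS, arcs := ES\<rparr>)" "src (T\<lparr>verts := VS, arcs := ES\<rparr>) f = u"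
      "src (T\<lparr>verts := VS, arcs := ES\<rparr>) g = u" for u f g
      using leaf[of u f g] that by simp
  qed
  then have "is_tree (T\<lparr>verts := VS - orb av H x, arcs := ?ES'\<rparr>)" by (simp add: delete_verts_update)
  moreover have "VS - orb av H x \<subseteq> verts T" "?ES' \<subseteq> arcs T" using subtree(2,3) by auto
  moreover have "av h ` (VS - orb av H x) \<subseteq> VS - orb av H x" "ae h ` ?ES' \<subseteq> ?ES'" if "h \<in> H" for h
    using delete_orbit_invariant[OF x that] by auto
  ultimately show ?thesis unfolding invariant_subtree_def subtree_def by blast
qed

lemma minimal_subtree_no_leaf:
  assumes e: "e \<in> ES" "src T e = v"
  shows "\<exists>f\<in>ES. src T f = v \<and> f \<noteq> e"
proof (rule ccontr)
  assume "\<not> ?thesis"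
  then have unique: "f = e" if "f \<in> ES" "src T f = v" for f using that by blast
  have v: "v \<in> VS" "v \<in> verts T" using e subtree_arc subtree(2) by auto
  define Ob where "Ob = orb av H v"
  have orbit_arc: "f = ae h e" if h: "h \<in> H" and f: "f \<in> ES" "src T f = av h v" for h f
  proof -
    have h': "inv\<^bsub>G\<^esub> h \<in> H" using h by (simp add: subgroup subgroup.m_inv_closed)
    have fT: "f \<in> arcs T" using f(1) subtree(3) by blast
    have "src T (ae (inv\<^bsub>G\<^esub> h) f) = v"
      using src_act[OF h' fT] f(2) V.act_inv_act[OF h v(2)] by simp
    then have "ae (inv\<^bsub>G\<^esub> h) f = e" using unique subtree_invariant(2)[OF h' f(1)] by blast
    then show ?thesis using E.act_act_inv[OF h fT] by simp
  qed
  have leaf: "f = g" if u: "u \<in> Ob" and fg: "f \<in> ES" "g \<in> ES" "src T f = u" "src T g = u" for u f g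
  proof -
    obtain h where h: "h \<in> H" "u = av h v" using u unfolding Ob_def orb_def by blast
    then show ?thesis using orbit_arc[OF h(1) fg(1)] orbit_arc[OF h(1) fg(2)] fg(3,4) by simp
  qed
  \<comment> \<open>Without inversions, the leaf edge e does not join two vertices of the orbit of v.\<close>
  have "tgt T e \<notin> Ob"
  proof
    assume "tgt T e \<in> Ob"
    then obtain h where h: "h \<in> H" "src T (rev_arc T e) = av h v"
      unfolding Ob_def orb_def tgt_def by auto
    have "rev_arc T e \<in> ES" using subtree_arc[OF e(1)] by blast
    then have "rev_arc T e = ae h e" by (rule orbit_arc[OF h(1) _ h(2)])
    moreover have "e \<in> arcs T" using e(1) subtree(3) by blast
    ultimately show False using act_ne_rev_arc[OF h(1)] by metis
  qed
  then have nonempty: "VS - Ob \<noteq> {}" using subtree_arc[OF e(1)] by blast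
  have "invariant_subtree T av ae H (VS - Ob) {f \<in> ES. src T f \<notin> Ob \<and> tgt T f \<notin> Ob}"
    using leaf nonempty unfolding Ob_def by (rule invariant_subtree_delete_orbit[OF v(2)])
  then have "VS - Ob = VS" by (rule minimal_subtree_unique) auto
  then show False using V.mem_orb_self[OF v(2)] v(1) unfolding Ob_def by blast
qed

abbreviation quotient :: "('v set, 'e set) sgraph" where
  "quotient \<equiv> quotient_graph T av ae H VS ES"

lemma src_quotient:
  assumes e: "e \<in> arcs T"
  shows "src quotient (orb ae H e) = orb av H (src T e)"
proof -
  obtain h where h: "h \<in> H" "(SOME e'. e' \<in> orb ae H e) = ae h e" using E.some_mem_orb[OF e] by blast
  have "src T e \<in> verts T" using sgraph_tree e by (simp add: sgraph_def)
  then show ?thesis using h src_act[OF h(1) e] V.orb_act[OF h(1)] by (simp add: quotient_graph_def)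
qed

lemma rev_arc_quotient:
  assumes e: "e \<in> arcs T"
  shows "rev_arc quotient (orb ae H e) = orb ae H (rev_arc T e)"
proof -
  obtain h where h: "h \<in> H" "(SOME e'. e' \<in> orb ae H e) = ae h e" using E.some_mem_orb[OF e] by blast
  have "rev_arc T e \<in> arcs T" using sgraph_tree e by (simp add: sgraph_def)
  then show ?thesis using h rev_arc_act[OF h(1) e, symmetric] E.orb_act[OF h(1)] by (simp add: quotient_graph_def)
qed

lemma verts_quotient: "verts quotient = orb av H ` VS"
  and arcs_quotient: "arcs quotient = orb ae H ` ES"
  by (simp_all add: quotient_graph_def)

lemma sgraph_quotient: "sgraph quotient"
  unfolding sgraph_def
proof
  fix Q assume "Q \<in> arcs quotient"
  then obtain e where e: "e \<in> ES" "Q = orb ae H e" by (auto simp: arcs_quotient)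
  have rev_e: "rev_arc T e \<in> ES" "rev_arc T (rev_arc T e) = e" "src T e \<in> VS"
    using subtree_arc[OF e(1)] by auto
  then have eT: "e \<in> arcs T" "rev_arc T e \<in> arcs T" using e(1) subtree(3) by auto
  have rev_Q: "rev_arc quotient Q = orb ae H (rev_arc T e)" using e(2) rev_arc_quotient[OF eT(1)] by simp
  have "rev_arc quotient Q \<noteq> Q"
  proof
    assume "rev_arc quotient Q = Q"
    then have "rev_arc T e \<in> orb ae H e" using rev_Q e(2) E.mem_orb_self[OF eT(2)] by simp
    then obtain h where "h \<in> H" "rev_arc T e = ae h e" unfolding orb_def by blast
    then show False using act_ne_rev_arc eT(1) by metis
  qed
  moreover have "rev_arc quotient Q \<in> arcs quotient" using rev_Q rev_e(1) by (simp add: arcs_quotient)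
  moreover have "rev_arc quotient (rev_arc quotient Q) = Q"
    using rev_Q rev_arc_quotient[OF eT(2)] rev_e(2) e(2) by simp
  moreover have "src quotient Q \<in> verts quotient"
    using e(2) src_quotient[OF eT(1)] rev_e(3) by (simp add: verts_quotient)
  ultimately show "rev_arc quotient Q \<in> arcs quotient \<and> rev_arc quotient (rev_arc quotient Q) = Q
      \<and> rev_arc quotient Q \<noteq> Q \<and> src quotient Q \<in> verts quotient"
    by blast
qed

lemma ndeg_verts_subset: "ndeg_verts T av ae H VS ES \<subseteq> verts quotient"
  unfolding ndeg_verts_def verts_quotient by blast

lemma two_le_deg_quotient:
  assumes fin: "finite (arcs quotient)" and v: "v \<in> VS" "degenerate T av ae H ES v"
  shows "2 \<le> deg quotient (orb av H v)"
proof -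
  obtain e where e: "e \<in> ES" "src T e = v" and stab: "stab av H v = stab ae H e"
    using v unfolding degenerate_def by blast
  obtain f where f: "f \<in> ES" "src T f = v" "f \<noteq> e" using minimal_subtree_no_leaf[OF e] by blast
  have eT: "e \<in> arcs T" and fT: "f \<in> arcs T" using e(1) f(1) subtree(3) by auto
  \<comment> \<open>An element of H carrying e to f fixes v, hence fixes e since H_v = H_e.\<close>
  have "orb ae H e \<noteq> orb ae H f"
  proof
    assume "orb ae H e = orb ae H f"
    then have "f \<in> orb ae H e" using E.mem_orb_self[OF fT] by simp
    then obtain h where h: "h \<in> H" "f = ae h e" unfolding orb_def by blast
    then have "av h v = v" using src_act[OF h(1) eT] e(2) f(2) by simp
    then have "h \<in> stab ae H e" using stab h(1) unfolding stab_def by blast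
    then show False using h(2) f(3) unfolding stab_def by simp
  qed
  then have "card {orb ae H e, orb ae H f} = 2" by simp
  moreover have "{orb ae H e, orb ae H f} \<subseteq> {Q \<in> arcs quotient. src quotient Q = orb av H v}"
    using e f src_quotient[OF eT] src_quotient[OF fT] by (simp add: arcs_quotient)
  moreover have "finite {Q \<in> arcs quotient. src quotient Q = orb av H v}" using fin by simp
  ultimately show ?thesis unfolding deg_def by (metis card_mono)
qed

lemma two_le_deg_attach_loops_quotient:
  assumes fin: "finite (arcs quotient)" and w: "w \<in> verts quotient"
  shows "2 \<le> deg (attach_loops quotient (ndeg_verts T av ae H VS ES)) w"
proof (cases "w \<in> ndeg_verts T av ae H VS ES")
  case True
  then show ?thesis by (simp add: deg_attach_loops[OF fin])
next
  case False
  obtain v where v: "v \<in> VS" "w = orb av H v" using w by (auto simp: verts_quotient)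
  with False have "degenerate T av ae H ES v" unfolding ndeg_verts_def by blast
  then show ?thesis using two_le_deg_quotient[OF fin v(1)] v(2) False by (simp add: deg_attach_loops[OF fin])
qed

end

theorem lemma3p1:
  fixes G :: "('g, 'b) monoid_scheme"
    and T :: "('v, 'e) sgraph"
    and av :: "'g \<Rightarrow> 'v \<Rightarrow> 'v" and ae :: "'g \<Rightarrow> 'e \<Rightarrow> 'e"
    and H :: "'g set" and VS :: "'v set" and ES :: "'e set"
  assumes act: "tree_action G T av ae"
    and noinv: "without_inversions G T ae"
    and sub: "subgroup H G"
    and hyp: "\<exists>h\<in>H. hyperbolic T av h"
    and TH: "minimal_invariant_subtree T av ae H VS ES"
    and tame: "finite (verts (quotient_graph T av ae H VS ES))"
              "finite (arcs (quotient_graph T av ae H VS ES))"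
  shows "Cbar_T T av ae H VS ES
           = rbar (attach_loops (quotient_graph T av ae H VS ES) (ndeg_verts T av ae H VS ES))
       \<and> real_of_int (rbar (attach_loops (quotient_graph T av ae H VS ES) (ndeg_verts T av ae H VS ES)))
           = (1/2) * (\<Sum>w \<in> verts (attach_loops (quotient_graph T av ae H VS ES) (ndeg_verts T av ae H VS ES)).
                 (real (deg (attach_loops (quotient_graph T av ae H VS ES) (ndeg_verts T av ae H VS ES)) w) - 2))"
proof -
  \<comment> \<open>hyp only serves to make T_H exist, and TH supplies T_H directly.\<close>
  interpret minimal_subtree G T av ae H VS ES
    by (rule minimal_subtree.intro[OF act noinv sub TH])
  let ?L = "ndeg_verts T av ae H VS ES"
  have fin_L: "finite ?L" using ndeg_verts_subset tame(1) finite_subset by blast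
  have "Cbar_T T av ae H VS ES = rbar (attach_loops quotient ?L)"
    using graph_rank_attach_loops[OF tame(2) fin_L] by (simp add: Cbar_T_def C_T_def rbar_def)
  moreover have "real_of_int (rbar (attach_loops quotient ?L))
      = 1/2 * (\<Sum>w \<in> verts (attach_loops quotient ?L). (real (deg (attach_loops quotient ?L) w) - 2))"
  proof (rule rbar_eq_half_sum_deg_minus_2)
    show "sgraph (attach_loops quotient ?L)"
      using sgraph_attach_loops[OF sgraph_quotient ndeg_verts_subset] .
    show "finite (verts (attach_loops quotient ?L))" "finite (arcs (attach_loops quotient ?L))"
      using tame fin_L by (simp_all add: attach_loops_def)
    show "2 \<le> deg (attach_loops quotient ?L) w" if "w \<in> verts (attach_loops quotient ?L)" for w
      using that two_le_deg_attach_loops_quotient[OF tame(2)] by (simp add: attach_loops_def)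
  qed
  ultimately show ?thesis by blast
qed

end
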